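(* Let $p$ be a prime, let $A=\mathbb Z_{(p)}[a_1,\dots,a_p]$ and $\Gamma=A[r]$, with the Hopf algebroid structure described in the context. Then there are invariant classes $c_i\in A$, $2\le i\le p$, with $c_i$ of degree $2i(p-1)$, such that \[ H^*(A\otimes\mathbb Q,\Gamma\otimes\mathbb Q)=H^0(A\otimes\mathbb Q,\Gamma\otimes\mathbb Q)=\mathbb Q[c_2,\dots,c_p], \] i.e. the rational cohomology is concentrated in cohomological degree $0$ and is a polynomial algebra on $c_2,\dots,c_p$.
   Context: $(A,\Gamma)$ is the graded Hopf algebroid with $A=\mathbb Z_{(p)}[a_1,\dots,a_p]$, $|a_i|=2i(p-1)$, $\Gamma=A[r]$, $|r|=2(p-1)$. The left unit is the inclusion $A\to\Gamma$; the right unit is $\eta_R(a_i)=\sum_{j=0}^i\binom{p-j}{i-j}a_jr^{i-j}$ (with $a_0=1$), and $r$ is primitive: $\Delta(r)=r\otimes1+1\otimes r$. (Geometrically, this corepresents curves $y^{p-1}=x^p+a_1x^{p-1}+\dots+a_p$ with coordinate changes $x\mapsto x+r$.) $H^*(A,\Gamma)$ denotes the cohomology of the cobar complex, i.e. $\operatorname{Ext}_{\Gamma}(A,A)$; an element $x\in A$ is invariant if $\eta_R(x)=x$, and $H^0$ is the ring of invariants. The coefficient ring is the $p$-local integers. *)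

theory Defs
  imports "HOL-Library.Poly_Mapping" "HOL-Computational_Algebra.Computational_Algebra"
begin

(* Multivariate polynomials as finitely supported maps monomial => coefficient.
   Variables: Inl j = a_j (1 <= j <= p), Inr k = r_k (k >= 1, the k-th cobar variable). *)
type_synonym 'a mpoly = "((nat + nat) \<Rightarrow>\<^sub>0 nat) \<Rightarrow>\<^sub>0 'a"

definition PC :: "'b::zero \<Rightarrow> ('v \<Rightarrow>\<^sub>0 nat) \<Rightarrow>\<^sub>0 'b" where
  "PC c = Poly_Mapping.single 0 c"

definition PX :: "'v \<Rightarrow> ('v \<Rightarrow>\<^sub>0 nat) \<Rightarrow>\<^sub>0 'b::{zero,one}" where
  "PX v = Poly_Mapping.single (Poly_Mapping.single v 1) 1"

definition pvars :: "(('v \<Rightarrow>\<^sub>0 nat) \<Rightarrow>\<^sub>0 'b::zero) \<Rightarrow> 'v set" where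
  "pvars f = (\<Union>m\<in>Poly_Mapping.keys f. Poly_Mapping.keys m)"

definition psubst :: "('v \<Rightarrow> ('w \<Rightarrow>\<^sub>0 nat) \<Rightarrow>\<^sub>0 'b::comm_ring_1)
    \<Rightarrow> (('v \<Rightarrow>\<^sub>0 nat) \<Rightarrow>\<^sub>0 'b) \<Rightarrow> ('w \<Rightarrow>\<^sub>0 nat) \<Rightarrow>\<^sub>0 'b" where
  "psubst \<sigma> f = (\<Sum>m\<in>Poly_Mapping.keys f.
      PC (Poly_Mapping.lookup f m) * (\<Prod>v\<in>Poly_Mapping.keys m. \<sigma> v ^ Poly_Mapping.lookup m v))"

definition aa :: "nat \<Rightarrow> 'b::comm_ring_1 mpoly" where
  "aa j = (if j = 0 then 1 else PX (Inl j))"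

definition etaR_gen :: "nat \<Rightarrow> nat \<Rightarrow> nat \<Rightarrow> 'b::comm_ring_1 mpoly" where
  "etaR_gen p k j = (\<Sum>l=0..j. of_nat ((p - l) choose (j - l)) * aa l * PX (Inr k) ^ (j - l))"

definition eta_R :: "nat \<Rightarrow> 'b::comm_ring_1 mpoly \<Rightarrow> 'b mpoly" where
  "eta_R p f = psubst (\<lambda>v. case v of Inl j \<Rightarrow> etaR_gen p 1 j | Inr k \<Rightarrow> PX (Inr k)) f"

(* elements of A = Z_(p)[a_1..a_p], viewed inside Q[a_1..a_p] *)
definition p_local :: "nat \<Rightarrow> rat \<Rightarrow> bool" where
  "p_local p q = coprime (snd (quotient_of q)) (int p)"

definition in_A :: "nat \<Rightarrow> rat mpoly \<Rightarrow> bool" where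
  "in_A p c = (pvars c \<subseteq> Inl ` {1..p} \<and> (\<forall>m\<in>Poly_Mapping.keys c. p_local p (Poly_Mapping.lookup c m)))"

definition wt :: "nat \<Rightarrow> nat + nat \<Rightarrow> nat" where
  "wt p v = (case v of Inl j \<Rightarrow> 2 * j * (p - 1) | Inr _ \<Rightarrow> 2 * (p - 1))"

definition homogeneous_of_degree :: "nat \<Rightarrow> rat mpoly \<Rightarrow> nat \<Rightarrow> bool" where
  "homogeneous_of_degree p c d =
     (\<forall>m\<in>Poly_Mapping.keys c. (\<Sum>v\<in>Poly_Mapping.keys m. wt p v * Poly_Mapping.lookup m v) = d)"

(* Rational normalized cobar complex: Gamma_Q^{\<otimes>_A n} = A_Q[r_1..r_n] (the element
   a r^{i_1}|...|r^{i_n} corresponds to a r_1^{i_1}...r_n^{i_n}); normalized = in the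
   augmentation ideal in each tensor factor, i.e. vanishing when any r_k is set to 0. *)
definition cobar_space :: "nat \<Rightarrow> nat \<Rightarrow> rat mpoly set" where
  "cobar_space p n = {f. pvars f \<subseteq> Inl ` {1..p} \<union> Inr ` {1..n} \<and>
      (\<forall>k\<in>{1..n}. psubst (\<lambda>v. if v = Inr k then 0 else PX v) f = 0)}"

(* coface d_0: gamma_1|...|gamma_n  |->  1|gamma_1|...|gamma_n *)
definition face0 :: "nat \<Rightarrow> rat mpoly \<Rightarrow> rat mpoly" where
  "face0 p f = psubst (\<lambda>v. case v of Inl j \<Rightarrow> etaR_gen p 1 j | Inr k \<Rightarrow> PX (Inr (Suc k))) f"

(* coface d_i (1 <= i <= n): apply the coproduct Delta(r) = r|1 + 1|r to the i-th factor *)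
definition facei :: "nat \<Rightarrow> rat mpoly \<Rightarrow> rat mpoly" where
  "facei i f = psubst (\<lambda>v. case v of Inl j \<Rightarrow> PX (Inl j)
      | Inr k \<Rightarrow> (if k < i then PX (Inr k) else if k = i then PX (Inr i) + PX (Inr (Suc i))
                  else PX (Inr (Suc k)))) f"

(* cobar differential d^n : C^n -> C^{n+1}; the last coface appends |1, i.e. is the inclusion *)
definition cobar_d :: "nat \<Rightarrow> nat \<Rightarrow> rat mpoly \<Rightarrow> rat mpoly" where
  "cobar_d p n f = face0 p f + (\<Sum>i=1..n. (-1) ^ i * facei i f) + (-1) ^ (n + 1) * f"

end

theory Submission
  imports Defs
begin

text \<open>
  Over \<open>\<rat>\<close> the element \<open>s = a\<^sub>1/p\<close> is a coordinate on which the coaction is the translation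
  \<open>s \<mapsto> s + r\<close>, because \<open>\<eta>\<^sub>R(a\<^sub>1) = a\<^sub>1 + p r\<close>. Moving the curve by \<open>x \<mapsto> x - s\<close> therefore
  yields invariant coefficients \<open>b\<^sub>j\<close>, with \<open>b\<^sub>1 = 0\<close>, and \<open>A\<^sub>\<rat> = \<rat>[b\<^sub>2,\<dots>,b\<^sub>p][s]\<close>:
  the rational Hopf algebroid is the additive group acting freely on the single coordinate \<open>s\<close>.
  Its cobar complex is contracted by the ring homomorphism \<open>h\<close> sending \<open>a\<^sub>j \<mapsto> b\<^sub>j\<close>,
  \<open>r\<^sub>1 \<mapsto> s\<close>, \<open>r\<^sub>k\<^sub>+\<^sub>1 \<mapsto> r\<^sub>k\<close>, which satisfies \<open>h d\<^sub>0 = id\<close>, \<open>d\<^sub>0 h = h d\<^sub>1\<close> and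
  \<open>d\<^sub>i h = h d\<^sub>i\<^sub>+\<^sub>1\<close>; so the cohomology is \<open>H\<^sup>0\<close>, the ring of invariants \<open>\<rat>[b\<^sub>2,\<dots>,b\<^sub>p]\<close>.
  The generators \<open>c\<^sub>i = p\<^sup>i b\<^sub>i\<close> have integer coefficients.
\<close>

lemma poly_mapping_sum_single:
  "(f :: 'a \<Rightarrow>\<^sub>0 'b::comm_monoid_add) = (\<Sum>m\<in>Poly_Mapping.keys f. Poly_Mapping.single m (Poly_Mapping.lookup f m))"
proof (rule poly_mapping_eqI)
  fix k
  show "Poly_Mapping.lookup f k = Poly_Mapping.lookup (\<Sum>m\<in>Poly_Mapping.keys f. Poly_Mapping.single m (Poly_Mapping.lookup f m)) k"
    by (cases "k \<in> Poly_Mapping.keys f")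
       (auto simp: lookup_sum lookup_single when_def in_keys_iff sum.delta' cong: if_cong)
qed

lemma poly_mapping_times_expand:
  "(f :: ('v \<Rightarrow>\<^sub>0 nat) \<Rightarrow>\<^sub>0 'b::comm_ring_1) * g =
     (\<Sum>m1\<in>Poly_Mapping.keys f. \<Sum>m2\<in>Poly_Mapping.keys g.
        Poly_Mapping.single (m1 + m2) (Poly_Mapping.lookup f m1 * Poly_Mapping.lookup g m2))"
  by (subst poly_mapping_sum_single[of f], subst poly_mapping_sum_single[of g])
     (simp add: sum_product mult_single)

lemma keys_times_obtain:
  assumes "m \<in> Poly_Mapping.keys ((f :: ('v \<Rightarrow>\<^sub>0 nat) \<Rightarrow>\<^sub>0 'b::comm_ring_1) * g)"
  obtains a b where "m = a + b" "a \<in> Poly_Mapping.keys f" "b \<in> Poly_Mapping.keys g"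
  using subsetD[OF keys_mult assms] by blast

subsection \<open>Substitution of polynomials\<close>

definition monom_subst :: "('v \<Rightarrow> 'c::comm_monoid_mult) \<Rightarrow> ('v \<Rightarrow>\<^sub>0 nat) \<Rightarrow> 'c" where
  "monom_subst \<sigma> m = (\<Prod>v\<in>Poly_Mapping.keys m. \<sigma> v ^ Poly_Mapping.lookup m v)"

lemma monom_subst_superset:
  "finite S \<Longrightarrow> Poly_Mapping.keys m \<subseteq> S \<Longrightarrow>
     monom_subst \<sigma> m = (\<Prod>v\<in>S. \<sigma> v ^ Poly_Mapping.lookup m v)"
  unfolding monom_subst_def by (rule prod.mono_neutral_left) (auto simp: in_keys_iff)

lemma monom_subst_add: "monom_subst \<sigma> (m1 + m2) = monom_subst \<sigma> m1 * monom_subst \<sigma> m2"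
proof -
  let ?S = "Poly_Mapping.keys m1 \<union> Poly_Mapping.keys m2"
  have "monom_subst \<sigma> (m1 + m2) = (\<Prod>v\<in>?S. \<sigma> v ^ Poly_Mapping.lookup (m1 + m2) v)"
    by (rule monom_subst_superset) (auto dest: keys_add[THEN subsetD])
  also have "\<dots> = (\<Prod>v\<in>?S. \<sigma> v ^ Poly_Mapping.lookup m1 v) * (\<Prod>v\<in>?S. \<sigma> v ^ Poly_Mapping.lookup m2 v)"
    by (simp add: lookup_add power_add prod.distrib)
  finally show ?thesis
    by (simp add: monom_subst_superset[of ?S m1] monom_subst_superset[of ?S m2])
qed

lemma PC_add: "PC (a + b) = PC a + PC b"
  by (simp add: PC_def single_add)

lemma PC_mult: "PC (a * b) = PC a * PC b"
  by (simp add: PC_def mult_single)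

lemma PC_1 [simp]: "PC 1 = 1"
  by (simp add: PC_def)

lemma PC_power: "PC a ^ n = PC (a ^ n)"
  by (induction n) (simp_all add: PC_mult)

lemma of_nat_eq_PC: "(of_nat n :: ('v \<Rightarrow>\<^sub>0 nat) \<Rightarrow>\<^sub>0 'b::comm_ring_1) = PC (of_nat n)"
  by (simp add: PC_def)

lemma psubst_eq_monom_subst:
  "psubst \<sigma> f = (\<Sum>m\<in>Poly_Mapping.keys f. PC (Poly_Mapping.lookup f m) * monom_subst \<sigma> m)"
  by (simp add: psubst_def monom_subst_def)

lemma psubst_superset:
  "finite S \<Longrightarrow> Poly_Mapping.keys f \<subseteq> S \<Longrightarrow>
     psubst \<sigma> f = (\<Sum>m\<in>S. PC (Poly_Mapping.lookup f m) * monom_subst \<sigma> m)"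
  unfolding psubst_eq_monom_subst by (rule sum.mono_neutral_left) (auto simp: in_keys_iff PC_def)

lemma psubst_0 [simp]: "psubst \<sigma> 0 = 0"
  by (simp add: psubst_def)

lemma psubst_add: "psubst \<sigma> (f + g) = psubst \<sigma> f + psubst \<sigma> g"
proof -
  let ?S = "Poly_Mapping.keys f \<union> Poly_Mapping.keys g"
  have "psubst \<sigma> (f + g) = (\<Sum>m\<in>?S. PC (Poly_Mapping.lookup (f + g) m) * monom_subst \<sigma> m)"
    by (rule psubst_superset) (auto dest: keys_add[THEN subsetD])
  also have "\<dots> = (\<Sum>m\<in>?S. PC (Poly_Mapping.lookup f m) * monom_subst \<sigma> m)
                 + (\<Sum>m\<in>?S. PC (Poly_Mapping.lookup g m) * monom_subst \<sigma> m)"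
    by (simp add: lookup_add PC_add distrib_right sum.distrib)
  finally show ?thesis
    by (simp add: psubst_superset[of ?S f] psubst_superset[of ?S g])
qed

lemma psubst_single: "psubst \<sigma> (Poly_Mapping.single m c) = PC c * monom_subst \<sigma> m"
  by (simp add: psubst_eq_monom_subst PC_def)

lemma psubst_sum: "psubst \<sigma> (sum F A) = (\<Sum>x\<in>A. psubst \<sigma> (F x))"
  by (induction A rule: infinite_finite_induct) (auto simp: psubst_add)

lemma psubst_mult: "psubst \<sigma> (f * g) = psubst \<sigma> f * psubst \<sigma> g"
proof -
  have "psubst \<sigma> (f * g) = (\<Sum>m1\<in>Poly_Mapping.keys f. \<Sum>m2\<in>Poly_Mapping.keys g.
      PC (Poly_Mapping.lookup f m1) * monom_subst \<sigma> m1 * (PC (Poly_Mapping.lookup g m2) * monom_subst \<sigma> m2))"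
    unfolding poly_mapping_times_expand[of f g]
    by (simp add: psubst_sum psubst_single PC_mult monom_subst_add mult_ac)
  then show ?thesis
    by (simp add: psubst_eq_monom_subst sum_product)
qed

lemma psubst_uminus: "psubst \<sigma> (- f) = - psubst \<sigma> f"
  using psubst_add[of \<sigma> f "- f"] by (simp add: minus_unique)

lemma psubst_diff: "psubst \<sigma> (f - g) = psubst \<sigma> f - psubst \<sigma> g"
  using psubst_add[of \<sigma> f "- g"] by (simp add: psubst_uminus)

lemma psubst_PC [simp]: "psubst \<sigma> (PC c) = PC c"
  by (simp add: PC_def psubst_single monom_subst_def)

lemma psubst_1 [simp]: "psubst \<sigma> 1 = 1"
  using psubst_PC[of \<sigma> 1] by simp

lemma psubst_PX [simp]: "psubst \<sigma> (PX v) = \<sigma> v"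
  by (simp add: PX_def psubst_single monom_subst_def PC_def)

lemma psubst_power: "psubst \<sigma> (f ^ n) = psubst \<sigma> f ^ n"
  by (induction n) (auto simp: psubst_mult)

lemma psubst_prod: "psubst \<sigma> (prod F A) = (\<Prod>x\<in>A. psubst \<sigma> (F x))"
  by (induction A rule: infinite_finite_induct) (auto simp: psubst_mult)

lemma psubst_of_nat [simp]: "psubst \<sigma> (of_nat n) = of_nat n"
  by (induction n) (auto simp: psubst_add)

lemma psubst_psubst: "psubst \<sigma> (psubst \<tau> f) = psubst (\<lambda>v. psubst \<sigma> (\<tau> v)) f"
proof -
  have "psubst \<sigma> (monom_subst \<tau> m) = monom_subst (\<lambda>v. psubst \<sigma> (\<tau> v)) m" for m
    by (simp add: monom_subst_def psubst_prod psubst_power)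
  then show ?thesis
    by (simp only: psubst_eq_monom_subst[of _ f] psubst_sum psubst_mult psubst_PC)
qed

lemma psubst_cong: "(\<And>v. v \<in> pvars f \<Longrightarrow> \<sigma> v = \<tau> v) \<Longrightarrow> psubst \<sigma> f = psubst \<tau> f"
  unfolding psubst_eq_monom_subst monom_subst_def pvars_def
  by (intro sum.cong refl arg_cong2[where f="(*)"] prod.cong arg_cong2[where f="power"]) fastforce+

lemma PX_power:
  "(PX v :: ('v \<Rightarrow>\<^sub>0 nat) \<Rightarrow>\<^sub>0 'b::comm_ring_1) ^ n = Poly_Mapping.single (Poly_Mapping.single v n) 1"
  by (induction n) (auto simp: PX_def mult_single single_add[symmetric] add.commute)

lemma monom_subst_PX:
  "(monom_subst PX m :: ('v \<Rightarrow>\<^sub>0 nat) \<Rightarrow>\<^sub>0 'b::comm_ring_1) = Poly_Mapping.single m 1"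
proof -
  have "(\<Prod>v\<in>K. (PX v :: ('v \<Rightarrow>\<^sub>0 nat) \<Rightarrow>\<^sub>0 'b) ^ Poly_Mapping.lookup m v)
        = Poly_Mapping.single (\<Sum>v\<in>K. Poly_Mapping.single v (Poly_Mapping.lookup m v)) 1" if "finite K" for K
    using that by (induction rule: finite_induct) (simp_all add: PX_power mult_single)
  then show ?thesis
    unfolding monom_subst_def by (simp flip: poly_mapping_sum_single)
qed

lemma psubst_PX_id [simp]: "psubst PX f = f"
  by (simp add: psubst_eq_monom_subst monom_subst_PX PC_def mult_single flip: poly_mapping_sum_single)

lemma psubst_fixes: "(\<And>v. v \<in> pvars f \<Longrightarrow> \<sigma> v = PX v) \<Longrightarrow> psubst \<sigma> f = f"
  using psubst_cong[of f \<sigma> PX] by simp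

lemma pvars_add: "pvars (f + g) \<subseteq> pvars f \<union> pvars (g :: ('v \<Rightarrow>\<^sub>0 nat) \<Rightarrow>\<^sub>0 'b::comm_ring_1)"
  unfolding pvars_def using keys_add[of f g] by auto

lemma pvars_uminus [simp]: "pvars (- f) = pvars (f :: ('v \<Rightarrow>\<^sub>0 nat) \<Rightarrow>\<^sub>0 'b::comm_ring_1)"
  unfolding pvars_def by (simp add: keys_def)

lemma pvars_mult: "pvars (f * g) \<subseteq> pvars f \<union> pvars (g :: ('v \<Rightarrow>\<^sub>0 nat) \<Rightarrow>\<^sub>0 'b::comm_ring_1)"
proof
  fix v assume "v \<in> pvars (f * g)"
  then obtain m where m: "m \<in> Poly_Mapping.keys (f * g)" "v \<in> Poly_Mapping.keys m"
    unfolding pvars_def by blast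
  obtain a b where "m = a + b" "a \<in> Poly_Mapping.keys f" "b \<in> Poly_Mapping.keys g"
    using m(1) by (rule keys_times_obtain)
  with m(2) keys_add[of a b] show "v \<in> pvars f \<union> pvars g"
    unfolding pvars_def by blast
qed

lemma pvars_PC [simp]: "pvars (PC c :: ('v \<Rightarrow>\<^sub>0 nat) \<Rightarrow>\<^sub>0 'b::comm_ring_1) = {}"
  by (simp add: pvars_def PC_def)

lemma pvars_PX: "pvars (PX v :: ('v \<Rightarrow>\<^sub>0 nat) \<Rightarrow>\<^sub>0 'b::comm_ring_1) \<subseteq> {v}"
  by (simp add: pvars_def PX_def)

lemma pvars_0 [simp]: "pvars (0 :: ('v \<Rightarrow>\<^sub>0 nat) \<Rightarrow>\<^sub>0 'b::comm_ring_1) = {}"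
  by (simp add: pvars_def)

lemma pvars_1 [simp]: "pvars (1 :: ('v \<Rightarrow>\<^sub>0 nat) \<Rightarrow>\<^sub>0 'b::comm_ring_1) = {}"
  by (simp add: pvars_def)

lemma pvars_of_nat [simp]: "pvars (of_nat n :: ('v \<Rightarrow>\<^sub>0 nat) \<Rightarrow>\<^sub>0 'b::comm_ring_1) = {}"
  by (simp add: of_nat_eq_PC)

lemma pvars_multI:
  "pvars f \<subseteq> U \<Longrightarrow> pvars g \<subseteq> U \<Longrightarrow> pvars (f * (g :: ('v \<Rightarrow>\<^sub>0 nat) \<Rightarrow>\<^sub>0 'b::comm_ring_1)) \<subseteq> U"
  using pvars_mult[of f g] by blast

lemma pvars_addI:
  "pvars f \<subseteq> U \<Longrightarrow> pvars g \<subseteq> U \<Longrightarrow> pvars (f + (g :: ('v \<Rightarrow>\<^sub>0 nat) \<Rightarrow>\<^sub>0 'b::comm_ring_1)) \<subseteq> U"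
  using pvars_add[of f g] by blast

lemma pvars_sumI:
  "(\<And>x. x \<in> A \<Longrightarrow> pvars (F x) \<subseteq> U) \<Longrightarrow> pvars (sum F A :: ('v \<Rightarrow>\<^sub>0 nat) \<Rightarrow>\<^sub>0 'b::comm_ring_1) \<subseteq> U"
  by (induction A rule: infinite_finite_induct) (simp_all add: pvars_addI)

lemma pvars_powerI:
  "pvars f \<subseteq> U \<Longrightarrow> pvars (f ^ n :: ('v \<Rightarrow>\<^sub>0 nat) \<Rightarrow>\<^sub>0 'b::comm_ring_1) \<subseteq> U"
  by (induction n) (simp_all add: pvars_multI)

lemma pvars_prodI:
  "(\<And>x. x \<in> A \<Longrightarrow> pvars (F x) \<subseteq> U) \<Longrightarrow> pvars (prod F A :: ('v \<Rightarrow>\<^sub>0 nat) \<Rightarrow>\<^sub>0 'b::comm_ring_1) \<subseteq> U"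
  by (induction A rule: infinite_finite_induct) (simp_all add: pvars_multI)

lemma pvars_psubstI:
  assumes "\<And>v. v \<in> pvars f \<Longrightarrow> pvars (\<sigma> v) \<subseteq> U"
  shows "pvars (psubst \<sigma> f) \<subseteq> U"
proof -
  have "v \<in> pvars f" if "m \<in> Poly_Mapping.keys f" "v \<in> Poly_Mapping.keys m" for m v
    using that unfolding pvars_def by blast
  then show ?thesis
    unfolding psubst_def using assms by (intro pvars_sumI pvars_multI pvars_prodI pvars_powerI) auto
qed

subsection \<open>Translating the curve\<close>

text \<open>\<open>translate p b \<rho> j\<close> is the coefficient of \<open>x\<^sup>p\<^sup>-\<^sup>j\<close> in \<open>\<Sum>\<^sub>l b\<^sub>l (x + \<rho>)\<^sup>p\<^sup>-\<^sup>l\<close>, i.e. the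
  \<open>j\<close>-th coefficient of the curve after the coordinate change \<open>x \<mapsto> x + \<rho>\<close>.\<close>

definition translate :: "nat \<Rightarrow> (nat \<Rightarrow> 'a::comm_ring_1) \<Rightarrow> 'a \<Rightarrow> nat \<Rightarrow> 'a" where
  "translate p b \<rho> j = (\<Sum>l=0..j. of_nat ((p - l) choose (j - l)) * b l * \<rho> ^ (j - l))"

lemma translate_0 [simp]: "translate p b \<rho> 0 = b 0"
  by (simp add: translate_def)

lemma translate_Suc_0: "translate p b \<rho> (Suc 0) = of_nat p * b 0 * \<rho> + b 1"
  by (simp add: translate_def)

lemma translate_by_0 [simp]: "translate p b 0 j = b j"
proof -
  have "translate p b 0 j = (\<Sum>l=0..j. if l = j then b l else 0)"
    unfolding translate_def by (intro sum.cong) (auto simp: power_0_left)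
  then show ?thesis by simp
qed

lemma binomial_choose_mult_sum:
  fixes \<rho> y :: "'a::comm_ring_1"
  assumes "K \<le> N"
  shows "(\<Sum>k=0..K. of_nat ((N - k) choose (K - k)) * of_nat (N choose k) * \<rho> ^ k * y ^ (K - k))
       = of_nat (N choose K) * (\<rho> + y) ^ K"
proof -
  have "(of_nat ((N - k) choose (K - k)) * of_nat (N choose k) :: 'a) = of_nat (N choose K) * of_nat (K choose k)"
    if "k \<le> K" for k
    using choose_mult[OF that assms] by (metis mult.commute of_nat_mult)
  then have "(\<Sum>k=0..K. of_nat ((N - k) choose (K - k)) * of_nat (N choose k) * \<rho> ^ k * y ^ (K - k))
      = (\<Sum>k=0..K. of_nat (N choose K) * (of_nat (K choose k) * \<rho> ^ k * y ^ (K - k)))"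
    by (intro sum.cong) (simp_all add: mult_ac)
  also have "\<dots> = of_nat (N choose K) * (\<rho> + y) ^ K"
    by (simp add: binomial_ring sum_distrib_left atLeast0AtMost)
  finally show ?thesis .
qed

lemma sum_triangle_swap:
  "(\<Sum>l=0..j. \<Sum>m=0..l. g l m) = (\<Sum>m=0..(j::nat). \<Sum>l=m..j. g l m)"
proof -
  have "(\<Sum>l=0..j. \<Sum>m=0..l. g l m) = (\<Sum>l=0..j. \<Sum>m | m \<in> {0..j} \<and> m \<le> l. g l m)"
    by (intro sum.cong refl) auto
  also have "\<dots> = (\<Sum>m=0..j. \<Sum>l | l \<in> {0..j} \<and> m \<le> l. g l m)"
    by (rule sum.swap_restrict) simp_all
  also have "\<dots> = (\<Sum>m=0..j. \<Sum>l=m..j. g l m)"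
    by (intro sum.cong refl) auto
  finally show ?thesis .
qed

text \<open>Without \<open>j \<le> p\<close> the truncated subtraction in \<open>(p - l) choose (j - l)\<close> breaks the identity.\<close>

lemma translate_translate:
  assumes "j \<le> p"
  shows "translate p (translate p b \<rho>) y j = translate p b (\<rho> + y) j"
proof -
  let ?f = "\<lambda>l m. of_nat ((p - l) choose (j - l)) * (of_nat ((p - m) choose (l - m)) * b m * \<rho> ^ (l - m)) * y ^ (j - l)"
  have "translate p (translate p b \<rho>) y j = (\<Sum>l=0..j. \<Sum>m=0..l. ?f l m)"
    by (simp add: translate_def sum_distrib_left sum_distrib_right)
  also have "\<dots> = (\<Sum>m=0..j. \<Sum>l=m..j. ?f l m)"
    by (rule sum_triangle_swap)
  also have "\<dots> = (\<Sum>m=0..j. of_nat ((p - m) choose (j - m)) * b m * (\<rho> + y) ^ (j - m))"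
  proof (rule sum.cong[OF refl])
    fix m assume m: "m \<in> {0..j}"
    have "(\<Sum>l=m..j. ?f l m) = (\<Sum>k=0..j-m. ?f (k + m) m)"
      using m sum.shift_bounds_cl_nat_ivl[of "\<lambda>l. ?f l m" 0 m "j - m"] by simp
    also have "\<dots> = b m * (\<Sum>k=0..j-m. of_nat (((p-m) - k) choose ((j-m) - k)) * of_nat ((p-m) choose k) * \<rho> ^ k * y ^ ((j-m) - k))"
      unfolding sum_distrib_left
      by (intro sum.cong refl) (simp add: mult_ac diff_diff_add add.commute)
    also have "\<dots> = b m * (of_nat ((p-m) choose (j-m)) * (\<rho> + y) ^ (j-m))"
      using assms m by (subst binomial_choose_mult_sum) auto
    finally show "(\<Sum>l=m..j. ?f l m) = of_nat ((p - m) choose (j - m)) * b m * (\<rho> + y) ^ (j - m)"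
      by (simp add: mult_ac)
  qed
  finally show ?thesis
    by (simp add: translate_def)
qed

lemma translate_scale: "translate p (\<lambda>l. u ^ l * b l) (u * y) j = u ^ j * translate p b y j"
  unfolding translate_def sum_distrib_left
proof (rule sum.cong[OF refl])
  fix l assume "l \<in> {0..j}"
  then have "u ^ j = u ^ l * u ^ (j - l)"
    by (simp flip: power_add)
  then show "of_nat ((p - l) choose (j - l)) * (u ^ l * b l) * (u * y) ^ (j - l) =
        u ^ j * (of_nat ((p - l) choose (j - l)) * b l * y ^ (j - l))"
    by (simp add: power_mult_distrib mult_ac)
qed

lemma psubst_translate:
  "psubst \<sigma> (translate p b y j) = translate p (\<lambda>l. psubst \<sigma> (b l)) (psubst \<sigma> y) j"
  by (simp add: translate_def psubst_sum psubst_mult psubst_power)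

lemma pvars_translateI:
  assumes "\<And>l. l \<le> j \<Longrightarrow> pvars (b l) \<subseteq> U" "pvars y \<subseteq> U"
  shows "pvars (translate p b y j :: ('v \<Rightarrow>\<^sub>0 nat) \<Rightarrow>\<^sub>0 'b::comm_ring_1) \<subseteq> U"
  unfolding translate_def by (intro pvars_sumI pvars_multI pvars_powerI assms) auto

lemma etaR_gen_eq_translate: "etaR_gen p k j = translate p aa (PX (Inr k)) j"
  by (simp add: etaR_gen_def translate_def)

lemma pvars_aa: "pvars (aa l :: 'b::comm_ring_1 mpoly) \<subseteq> Inl ` {l} - {Inl 0}"
  using pvars_PX[of "Inl l"] by (auto simp: aa_def)

definition centering :: "nat \<Rightarrow> rat mpoly" where
  "centering p = PC (1 / of_nat p) * PX (Inl 1)"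

definition centered_coeff :: "nat \<Rightarrow> nat \<Rightarrow> rat mpoly" where
  "centered_coeff p j = translate p aa (- centering p) j"

lemma of_nat_mult_centering:
  assumes "p > 0"
  shows "of_nat p * centering p = PX (Inl 1)"
proof -
  have "of_nat p * centering p = PC (of_nat p * (1 / of_nat p)) * PX (Inl 1)"
    by (simp only: centering_def of_nat_eq_PC PC_mult mult.assoc)
  then show ?thesis
    using assms by simp
qed

lemma centered_coeff_1: "p > 0 \<Longrightarrow> centered_coeff p 1 = 0"
  using of_nat_mult_centering[of p] by (simp add: centered_coeff_def translate_Suc_0 aa_def)

lemma pvars_centering: "pvars (centering p) \<subseteq> {Inl 1}"
  unfolding centering_def by (intro pvars_multI) (simp_all add: pvars_PX)

lemma pvars_centered_coeff: "pvars (centered_coeff p j) \<subseteq> Inl ` {1..max 1 j}"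
  unfolding centered_coeff_def
  using pvars_aa pvars_centering by (intro pvars_translateI) fastforce+

text \<open>Instances: the right unit and the coface \<open>d\<^sub>0\<close> (\<open>\<rho> = r\<close>), and the homotopy
  (\<open>\<rho> = -a\<^sub>1/p\<close>).\<close>

locale curve_translation =
  fixes p :: nat and \<sigma> :: "nat + nat \<Rightarrow> rat mpoly" and \<rho> :: "rat mpoly"
  assumes p_pos: "p > 0"
    and subst_coeff: "\<And>l. l \<ge> 1 \<Longrightarrow> \<sigma> (Inl l) = translate p aa \<rho> l"
begin

lemma psubst_aa: "psubst \<sigma> (aa l) = translate p aa \<rho> l"
  using subst_coeff[of l] by (cases "l = 0") (auto simp: aa_def)

lemma psubst_centering: "psubst \<sigma> (centering p) = centering p + \<rho>"
proof -
  have "psubst \<sigma> (centering p) = PC (1 / of_nat p) * (of_nat p * \<rho> + PX (Inl 1))"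
    using subst_coeff[of 1] by (simp add: centering_def psubst_mult translate_Suc_0 aa_def)
  also have "\<dots> = (PC (1 / of_nat p) * of_nat p) * \<rho> + centering p"
    by (simp add: centering_def algebra_simps)
  finally show ?thesis
    using p_pos by (simp add: of_nat_eq_PC flip: PC_mult)
qed

lemma psubst_centered_coeff:
  assumes "j \<le> p"
  shows "psubst \<sigma> (centered_coeff p j) = centered_coeff p j"
proof -
  have "psubst \<sigma> (centered_coeff p j) = translate p (translate p aa \<rho>) (- (centering p + \<rho>)) j"
    by (simp add: centered_coeff_def psubst_translate psubst_uminus psubst_centering psubst_aa)
  also have "\<dots> = centered_coeff p j"
    using assms by (simp add: translate_translate centered_coeff_def)
  finally show ?thesis .
qed

end

lemma curve_translation_by_r:
  "p > 0 \<Longrightarrow> curve_translation p (\<lambda>v. case v of Inl j \<Rightarrow> etaR_gen p 1 j | Inr k \<Rightarrow> g k) (PX (Inr 1))"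
  by unfold_locales (simp_all add: etaR_gen_eq_translate)

subsection \<open>A contracting homotopy of the rational cobar complex\<close>

definition homotopy_subst :: "nat \<Rightarrow> nat + nat \<Rightarrow> rat mpoly" where
  "homotopy_subst p v =
     (case v of Inl j \<Rightarrow> centered_coeff p j | Inr k \<Rightarrow> if k = 1 then centering p else PX (Inr (k - 1)))"

definition cobar_homotopy :: "nat \<Rightarrow> rat mpoly \<Rightarrow> rat mpoly" where
  "cobar_homotopy p f = psubst (homotopy_subst p) f"

lemma curve_translation_homotopy_subst:
  "p > 0 \<Longrightarrow> curve_translation p (homotopy_subst p) (- centering p)"
  by unfold_locales (simp_all add: homotopy_subst_def centered_coeff_def)

lemma psubst_fixes_coeff_poly:
  assumes "pvars f \<subseteq> range Inl" "\<And>j. \<sigma> (Inl j) = PX (Inl j)"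
  shows "psubst \<sigma> f = f"
  using assms by (intro psubst_fixes) auto

lemma cobar_homotopy_face0:
  assumes "p > 0" and F: "pvars F \<subseteq> Inl ` {1..p} \<union> Inr ` {1..}"
  shows "cobar_homotopy p (face0 p F) = F"
  unfolding cobar_homotopy_def face0_def psubst_psubst
proof (rule psubst_fixes)
  interpret H: curve_translation p "homotopy_subst p" "- centering p"
    using assms(1) by (rule curve_translation_homotopy_subst)
  fix v assume "v \<in> pvars F"
  with F consider (coeff) j where "v = Inl j" "1 \<le> j" "j \<le> p" | (cobar) k where "v = Inr k" "1 \<le> k"
    by auto
  then show "psubst (homotopy_subst p) (case v of Inl j \<Rightarrow> etaR_gen p 1 j | Inr k \<Rightarrow> PX (Inr (Suc k))) = PX v"
  proof cases
    case coeff
    then have "psubst (homotopy_subst p) (etaR_gen p 1 j)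
        = translate p (translate p aa (- centering p)) (centering p) j"
      by (simp add: etaR_gen_eq_translate psubst_translate H.psubst_aa homotopy_subst_def)
    also have "\<dots> = aa j"
      using coeff by (simp add: translate_translate)
    finally show ?thesis
      using coeff by (simp add: aa_def)
  qed (simp add: homotopy_subst_def)
qed

lemma face0_cobar_homotopy:
  assumes "p > 0" and F: "pvars F \<subseteq> Inl ` {1..p} \<union> Inr ` {1..}"
  shows "face0 p (cobar_homotopy p F) = cobar_homotopy p (facei 1 F)"
  unfolding cobar_homotopy_def face0_def facei_def psubst_psubst
proof (rule psubst_cong)
  interpret T: curve_translation p "\<lambda>v. case v of Inl j \<Rightarrow> etaR_gen p 1 j | Inr k \<Rightarrow> PX (Inr (Suc k))" "PX (Inr 1)"
    using assms(1) by (rule curve_translation_by_r)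
  fix v assume "v \<in> pvars F"
  with F consider (coeff) j where "v = Inl j" "j \<le> p" | (r1) "v = Inr 1" | (cobar) k where "v = Inr k" "2 \<le> k"
    by force
  then show "psubst (\<lambda>v. case v of Inl j \<Rightarrow> etaR_gen p 1 j | Inr k \<Rightarrow> PX (Inr (Suc k))) (homotopy_subst p v)
      = psubst (homotopy_subst p) (case v of Inl j \<Rightarrow> PX (Inl j) | Inr k \<Rightarrow>
          if k < 1 then PX (Inr k) else if k = 1 then PX (Inr 1) + PX (Inr (Suc 1)) else PX (Inr (Suc k)))"
  proof cases
    case coeff
    then show ?thesis
      by (simp add: homotopy_subst_def T.psubst_centered_coeff)
  next
    case r1
    then show ?thesis
      by (simp add: homotopy_subst_def T.psubst_centering psubst_add add.commute)
  qed (simp add: homotopy_subst_def)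
qed

lemma facei_cobar_homotopy:
  assumes "i \<ge> 1" and F: "pvars F \<subseteq> Inl ` {1..p} \<union> Inr ` {1..}"
  shows "facei i (cobar_homotopy p F) = cobar_homotopy p (facei (Suc i) F)"
  unfolding cobar_homotopy_def facei_def psubst_psubst
proof (rule psubst_cong)
  let ?\<phi> = "\<lambda>i v. case v of Inl j \<Rightarrow> PX (Inl j) | Inr k \<Rightarrow>
      if k < i then PX (Inr k) else if k = i then PX (Inr i) + PX (Inr (Suc i)) else PX (Inr (Suc k))"
  fix v assume "v \<in> pvars F"
  with F consider (coeff) j where "v = Inl j" | (r1) "v = Inr 1" | (cobar) k where "v = Inr k" "2 \<le> k"
    by force
  then show "psubst (?\<phi> i) (homotopy_subst p v) = psubst (homotopy_subst p) (?\<phi> (Suc i) v)"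
  proof cases
    case coeff
    have "psubst (?\<phi> i) (centered_coeff p j) = centered_coeff p j"
      using pvars_centered_coeff[of p j] by (intro psubst_fixes_coeff_poly) auto
    then show ?thesis
      using coeff by (simp add: homotopy_subst_def)
  next
    case r1
    have "psubst (?\<phi> i) (centering p) = centering p"
      using pvars_centering[of p] by (intro psubst_fixes_coeff_poly) auto
    then show ?thesis
      using r1 assms(1) by (simp add: homotopy_subst_def)
  next
    case cobar
    then show ?thesis
      using assms(1) by (auto simp: homotopy_subst_def psubst_add Suc_diff_Suc)
  qed
qed

lemma cobar_homotopy_ring_hom:
  "cobar_homotopy p 0 = 0"
  "cobar_homotopy p (f + g) = cobar_homotopy p f + cobar_homotopy p g"
  "cobar_homotopy p (f * g) = cobar_homotopy p f * cobar_homotopy p g"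
  "cobar_homotopy p (f - g) = cobar_homotopy p f - cobar_homotopy p g"
  "cobar_homotopy p (- f) = - cobar_homotopy p f"
  "cobar_homotopy p (sum F A) = (\<Sum>x\<in>A. cobar_homotopy p (F x))"
  "cobar_homotopy p ((- 1) ^ n) = (- 1) ^ n"
  by (simp_all add: cobar_homotopy_def psubst_add psubst_mult psubst_diff psubst_uminus psubst_sum psubst_power)

text \<open>The last coface is the inclusion, which commutes with \<open>h\<close>; the remaining terms
  telescope.\<close>

lemma cobar_homotopy_equation:
  assumes "p > 0" and F: "pvars F \<subseteq> Inl ` {1..p} \<union> Inr ` {1..}"
  shows "cobar_d p m (cobar_homotopy p F) + cobar_homotopy p (cobar_d p (Suc m) F) = F"
proof -
  let ?h = "cobar_homotopy p" and ?T = "\<Sum>i=1..m. (- 1) ^ i * cobar_homotopy p (facei (Suc i) F)"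
  have "(\<Sum>i=1..Suc m. (- 1) ^ i * ?h (facei i F)) = - ?h (facei 1 F) + (\<Sum>i=Suc 1..Suc m. (- 1) ^ i * ?h (facei i F))"
    by (subst sum.atLeast_Suc_atMost) simp_all
  also have "(\<Sum>i=Suc 1..Suc m. (- 1) ^ i * ?h (facei i F)) = - ?T"
    by (subst sum.shift_bounds_cl_Suc_ivl) (simp add: sum_negf)
  finally have faces: "(\<Sum>i=1..Suc m. (- 1) ^ i * ?h (facei i F)) = - ?h (facei 1 F) - ?T"
    by simp
  have "?h (cobar_d p (Suc m) F) = F + (\<Sum>i=1..Suc m. (- 1) ^ i * ?h (facei i F)) + (- 1) ^ (Suc m + 1) * ?h F"
    unfolding cobar_d_def by (simp add: cobar_homotopy_ring_hom cobar_homotopy_face0[OF assms])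
  moreover have "cobar_d p m (?h F) = ?h (facei 1 F) + ?T + (- 1) ^ (m + 1) * ?h F"
    unfolding cobar_d_def face0_cobar_homotopy[OF assms] using facei_cobar_homotopy[OF _ F] by simp
  ultimately show ?thesis
    using faces by simp
qed

lemma cobar_homotopy_cobar_space:
  assumes "p > 0" and F: "F \<in> cobar_space p (Suc m)"
  shows "cobar_homotopy p F \<in> cobar_space p m"
proof -
  let ?z = "\<lambda>k v. if v = Inr k then 0 else PX v :: rat mpoly"
  from F have Fv: "pvars F \<subseteq> Inl ` {1..p} \<union> Inr ` {1..Suc m}"
    and Fz: "\<And>k. k \<in> {1..Suc m} \<Longrightarrow> psubst (?z k) F = 0"
    by (auto simp: cobar_space_def)
  have "pvars (cobar_homotopy p F) \<subseteq> Inl ` {1..p} \<union> Inr ` {1..m}"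
    unfolding cobar_homotopy_def
  proof (rule pvars_psubstI)
    fix v assume "v \<in> pvars F"
    with Fv consider (coeff) j where "v = Inl j" "1 \<le> j" "j \<le> p" | (r1) "v = Inr 1"
      | (cobar) k where "v = Inr k" "2 \<le> k" "k \<le> Suc m"
      by force
    then show "pvars (homotopy_subst p v) \<subseteq> Inl ` {1..p} \<union> Inr ` {1..m}"
    proof cases
      case coeff
      then show ?thesis
        using pvars_centered_coeff[of p j] by (auto simp: homotopy_subst_def)
    next
      case r1
      then show ?thesis
        using pvars_centering[of p] assms(1) by (auto simp: homotopy_subst_def)
    next
      case cobar
      then show ?thesis
        using pvars_PX[of "Inr (k - 1)"] by (force simp: homotopy_subst_def)
    qed
  qed
  moreover have "psubst (?z k) (cobar_homotopy p F) = 0" if k: "k \<in> {1..m}" for k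
  proof -
    have "psubst (?z k) (cobar_homotopy p F) = cobar_homotopy p (psubst (?z (Suc k)) F)"
      unfolding cobar_homotopy_def psubst_psubst
    proof (rule psubst_cong)
      fix v assume "v \<in> pvars F"
      with Fv consider (coeff) j where "v = Inl j" | (r1) "v = Inr 1" | (cobar) l where "v = Inr l" "2 \<le> l"
        by force
      then show "psubst (?z k) (homotopy_subst p v) = psubst (homotopy_subst p) (?z (Suc k) v)"
      proof cases
        case coeff
        have "psubst (?z k) (centered_coeff p j) = centered_coeff p j"
          using pvars_centered_coeff[of p j] by (intro psubst_fixes_coeff_poly) auto
        then show ?thesis
          using coeff by (simp add: homotopy_subst_def)
      next
        case r1
        have "psubst (?z k) (centering p) = centering p"
          using pvars_centering[of p] by (intro psubst_fixes_coeff_poly) auto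
        then show ?thesis
          using r1 k by (simp add: homotopy_subst_def)
      qed (use k in \<open>auto simp: homotopy_subst_def\<close>)
    qed
    then show ?thesis
      using Fz[of "Suc k"] k by (simp add: cobar_homotopy_def)
  qed
  ultimately show ?thesis
    by (auto simp: cobar_space_def)
qed

lemma cobar_exact:
  assumes "p > 0" "n \<ge> 1" "f \<in> cobar_space p n" "cobar_d p n f = 0"
  shows "\<exists>g\<in>cobar_space p (n - 1). cobar_d p (n - 1) g = f"
proof -
  obtain m where m: "n = Suc m"
    using assms(2) by (cases n) auto
  have "pvars f \<subseteq> Inl ` {1..p} \<union> Inr ` {1..}"
    using assms(3) by (auto simp: cobar_space_def)
  then have "cobar_d p m (cobar_homotopy p f) = f"
    using cobar_homotopy_equation[OF assms(1), of f m] assms(4) m by (simp add: cobar_homotopy_ring_hom)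
  moreover have "cobar_homotopy p f \<in> cobar_space p m"
    using cobar_homotopy_cobar_space[OF assms(1)] assms(3) m by simp
  ultimately show ?thesis
    using m by auto
qed

definition invariant_gen :: "nat \<Rightarrow> nat \<Rightarrow> rat mpoly" where
  "invariant_gen p i = of_nat p ^ i * centered_coeff p i"

lemma invariant_gen_eq_translate:
  assumes "p > 0"
  shows "invariant_gen p i = translate p (\<lambda>l. of_nat p ^ l * aa l) (- PX (Inl 1)) i"
proof -
  have "- PX (Inl 1) = of_nat p * - centering p"
    using of_nat_mult_centering[OF assms] by simp
  then show ?thesis
    by (simp only: invariant_gen_def centered_coeff_def translate_scale)
qed

lemma psubst_invariant_gen_by_r:
  assumes "p > 0" "i \<le> p"
  shows "psubst (\<lambda>v. case v of Inl j \<Rightarrow> etaR_gen p 1 j | Inr k \<Rightarrow> g k) (invariant_gen p i) = invariant_gen p i"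
proof -
  interpret curve_translation p "\<lambda>v. case v of Inl j \<Rightarrow> etaR_gen p 1 j | Inr k \<Rightarrow> g k" "PX (Inr 1)"
    using assms(1) by (rule curve_translation_by_r)
  show ?thesis
    using assms(2) by (simp add: invariant_gen_def psubst_mult psubst_power psubst_centered_coeff)
qed

lemma eta_R_invariant_gen: "p > 0 \<Longrightarrow> i \<le> p \<Longrightarrow> eta_R p (invariant_gen p i) = invariant_gen p i"
  unfolding eta_R_def by (rule psubst_invariant_gen_by_r)

lemma face0_invariant_gen: "p > 0 \<Longrightarrow> i \<le> p \<Longrightarrow> face0 p (invariant_gen p i) = invariant_gen p i"
  unfolding face0_def by (rule psubst_invariant_gen_by_r)

lemma pvars_invariant_gen: "p > 0 \<Longrightarrow> i \<le> p \<Longrightarrow> pvars (invariant_gen p i) \<subseteq> Inl ` {1..p}"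
  unfolding invariant_gen_def
  using pvars_centered_coeff[of p i] by (intro pvars_multI pvars_powerI) force+

definition int_coeffs :: "(('v \<Rightarrow>\<^sub>0 nat) \<Rightarrow>\<^sub>0 'b::comm_ring_1) \<Rightarrow> bool" where
  "int_coeffs f \<longleftrightarrow> (\<forall>m. Poly_Mapping.lookup f m \<in> \<int>)"

lemma int_coeffs_0: "int_coeffs 0"
  by (simp add: int_coeffs_def)

lemma int_coeffs_1: "int_coeffs 1"
  by (simp add: int_coeffs_def lookup_one when_def)

lemma int_coeffs_of_nat: "int_coeffs (of_nat n)"
  by (simp add: int_coeffs_def lookup_of_nat when_def)

lemma int_coeffs_PX: "int_coeffs (PX v)"
  by (simp add: int_coeffs_def PX_def lookup_single when_def)

lemma int_coeffs_add: "int_coeffs f \<Longrightarrow> int_coeffs g \<Longrightarrow> int_coeffs (f + g)"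
  by (simp add: int_coeffs_def lookup_add)

lemma int_coeffs_uminus: "int_coeffs f \<Longrightarrow> int_coeffs (- f)"
  by (simp add: int_coeffs_def)

lemma int_coeffs_mult: "int_coeffs f \<Longrightarrow> int_coeffs g \<Longrightarrow> int_coeffs (f * g)"
  unfolding int_coeffs_def poly_mapping_times_expand[of f g] lookup_sum lookup_single
  by (intro allI Ints_sum) (auto simp: when_def)

lemma int_coeffs_power: "int_coeffs f \<Longrightarrow> int_coeffs (f ^ n)"
  by (induction n) (simp_all add: int_coeffs_1 int_coeffs_mult)

lemma int_coeffs_sum: "(\<And>x. x \<in> A \<Longrightarrow> int_coeffs (F x)) \<Longrightarrow> int_coeffs (sum F A)"
  by (induction A rule: infinite_finite_induct) (simp_all add: int_coeffs_add int_coeffs_0)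

lemma int_coeffs_invariant_gen: "p > 0 \<Longrightarrow> int_coeffs (invariant_gen p i)"
  unfolding invariant_gen_eq_translate translate_def aa_def
  by (intro int_coeffs_sum int_coeffs_mult int_coeffs_of_nat int_coeffs_power int_coeffs_uminus
      int_coeffs_PX) (simp add: int_coeffs_1 int_coeffs_PX)

lemma in_A_invariant_gen:
  assumes "p > 0" "i \<le> p"
  shows "in_A p (invariant_gen p i)"
  unfolding in_A_def
proof (intro conjI pvars_invariant_gen[OF assms] ballI)
  fix m
  obtain z where "Poly_Mapping.lookup (invariant_gen p i) m = of_int z"
    using int_coeffs_invariant_gen[OF assms(1)] unfolding int_coeffs_def by (meson Ints_cases)
  then show "p_local p (Poly_Mapping.lookup (invariant_gen p i) m)"
    by (simp add: p_local_def)
qed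

definition weighted_degree :: "nat \<Rightarrow> (nat + nat \<Rightarrow>\<^sub>0 nat) \<Rightarrow> nat" where
  "weighted_degree p m = (\<Sum>v\<in>Poly_Mapping.keys m. wt p v * Poly_Mapping.lookup m v)"

lemma weighted_degree_superset:
  "finite S \<Longrightarrow> Poly_Mapping.keys m \<subseteq> S \<Longrightarrow> weighted_degree p m = (\<Sum>v\<in>S. wt p v * Poly_Mapping.lookup m v)"
  unfolding weighted_degree_def by (rule sum.mono_neutral_left) (auto simp: in_keys_iff)

lemma weighted_degree_add: "weighted_degree p (m1 + m2) = weighted_degree p m1 + weighted_degree p m2"
proof -
  let ?S = "Poly_Mapping.keys m1 \<union> Poly_Mapping.keys m2"
  have "weighted_degree p (m1 + m2) = (\<Sum>v\<in>?S. wt p v * Poly_Mapping.lookup (m1 + m2) v)"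
    by (rule weighted_degree_superset) (auto dest: keys_add[THEN subsetD])
  also have "\<dots> = (\<Sum>v\<in>?S. wt p v * Poly_Mapping.lookup m1 v) + (\<Sum>v\<in>?S. wt p v * Poly_Mapping.lookup m2 v)"
    by (simp add: lookup_add algebra_simps sum.distrib)
  finally show ?thesis
    by (simp add: weighted_degree_superset[of ?S m1] weighted_degree_superset[of ?S m2])
qed

lemma homogeneous_of_degree_iff:
  "homogeneous_of_degree p c d \<longleftrightarrow> (\<forall>m\<in>Poly_Mapping.keys c. weighted_degree p m = d)"
  by (simp add: homogeneous_of_degree_def weighted_degree_def)

lemma homogeneous_of_degree_add:
  "homogeneous_of_degree p f d \<Longrightarrow> homogeneous_of_degree p g d \<Longrightarrow> homogeneous_of_degree p (f + g) d"
  unfolding homogeneous_of_degree_iff using keys_add[of f g] by blast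

lemma homogeneous_of_degree_mult:
  assumes "homogeneous_of_degree p f d1" "homogeneous_of_degree p g d2"
  shows "homogeneous_of_degree p (f * g) (d1 + d2)"
  unfolding homogeneous_of_degree_iff
proof
  fix m assume "m \<in> Poly_Mapping.keys (f * g)"
  then obtain a b where "m = a + b" "a \<in> Poly_Mapping.keys f" "b \<in> Poly_Mapping.keys g"
    by (rule keys_times_obtain)
  with assms show "weighted_degree p m = d1 + d2"
    by (simp add: weighted_degree_add homogeneous_of_degree_iff)
qed

lemma homogeneous_of_degree_uminus:
  "homogeneous_of_degree p f d \<Longrightarrow> homogeneous_of_degree p (- f) d"
  by (simp add: homogeneous_of_degree_def)

lemma homogeneous_of_degree_1: "homogeneous_of_degree p 1 0"
  by (simp add: homogeneous_of_degree_def)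

lemma homogeneous_of_degree_of_nat: "homogeneous_of_degree p (of_nat n) 0"
  by (simp add: homogeneous_of_degree_def flip: single_of_nat)

lemma homogeneous_of_degree_PX: "homogeneous_of_degree p (PX v) (wt p v)"
  by (simp add: homogeneous_of_degree_def PX_def)

lemma homogeneous_of_degree_power:
  "homogeneous_of_degree p f d \<Longrightarrow> homogeneous_of_degree p (f ^ n) (n * d)"
  by (induction n) (simp_all add: homogeneous_of_degree_1 homogeneous_of_degree_mult)

lemma homogeneous_of_degree_sum:
  "(\<And>x. x \<in> A \<Longrightarrow> homogeneous_of_degree p (F x) d) \<Longrightarrow> homogeneous_of_degree p (sum F A) d"
  by (induction A rule: infinite_finite_induct)
     (simp_all add: homogeneous_of_degree_add, simp_all add: homogeneous_of_degree_def)

lemma homogeneous_of_degree_aa: "homogeneous_of_degree p (aa l) (2 * l * (p - 1))"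
  using homogeneous_of_degree_PX[of p "Inl l"]
  by (cases "l = 0") (simp_all add: aa_def homogeneous_of_degree_1 wt_def)

lemma homogeneous_invariant_gen:
  assumes "p > 0"
  shows "homogeneous_of_degree p (invariant_gen p i) (2 * i * (p - 1))"
  unfolding invariant_gen_eq_translate[OF assms] translate_def
proof (intro homogeneous_of_degree_sum)
  fix l assume "l \<in> {0..i}"
  then obtain d where "i = l + d"
    using le_Suc_ex by auto
  then have "0 + (l * 0 + 2 * l * (p - 1)) + (i - l) * wt p (Inl 1) = 2 * i * (p - 1)"
    by (simp add: wt_def add_mult_distrib add_mult_distrib2)
  moreover have "homogeneous_of_degree p (of_nat ((p - l) choose (i - l)) * (of_nat p ^ l * aa l) * (- PX (Inl 1)) ^ (i - l))
     (0 + (l * 0 + 2 * l * (p - 1)) + (i - l) * wt p (Inl 1))"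
    by (intro homogeneous_of_degree_mult homogeneous_of_degree_of_nat homogeneous_of_degree_power
        homogeneous_of_degree_aa homogeneous_of_degree_uminus homogeneous_of_degree_PX)
  ultimately show "homogeneous_of_degree p (of_nat ((p - l) choose (i - l)) * (of_nat p ^ l * aa l) * (- PX (Inl 1)) ^ (i - l))
      (2 * i * (p - 1))"
    by simp
qed

subsection \<open>The ring of invariants\<close>

text \<open>Followed by the generators, this substitution is the homotopy on \<open>A\<close>, which retracts
  \<open>A\<^sub>\<rat>\<close> onto the invariants.\<close>

definition invariant_coords :: "nat \<Rightarrow> nat + nat \<Rightarrow> (nat \<Rightarrow>\<^sub>0 nat) \<Rightarrow>\<^sub>0 rat" where
  "invariant_coords p v =
     (case v of Inl j \<Rightarrow> if j = 1 then 0 else PC (1 / of_nat p ^ j) * PX j | Inr k \<Rightarrow> 0)"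

lemma PC_inverse_mult_power:
  "p > 0 \<Longrightarrow> PC (1 / of_nat p ^ j :: rat) * of_nat p ^ j = (1 :: ('v \<Rightarrow>\<^sub>0 nat) \<Rightarrow>\<^sub>0 rat)"
  by (simp add: of_nat_eq_PC PC_power flip: PC_mult)

lemma psubst_invariant_gen_coords:
  assumes "p > 0"
  shows "psubst (invariant_gen p) (invariant_coords p (Inl j)) = homotopy_subst p (Inl j)"
proof (cases "j = 1")
  case True
  then show ?thesis
    using centered_coeff_1[OF assms] by (simp add: invariant_coords_def homotopy_subst_def)
next
  case False
  then have "psubst (invariant_gen p) (invariant_coords p (Inl j))
      = (PC (1 / of_nat p ^ j) * of_nat p ^ j) * centered_coeff p j"
    by (simp add: invariant_coords_def psubst_mult invariant_gen_def mult_ac)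
  also have "\<dots> = centered_coeff p j"
    by (simp only: PC_inverse_mult_power[OF assms] mult_1_left)
  finally show ?thesis
    by (simp add: homotopy_subst_def)
qed

lemma psubst_invariant_coords_gen:
  assumes "p > 0" "2 \<le> j"
  shows "psubst (invariant_coords p) (invariant_gen p j) = PX j"
proof -
  have "psubst (invariant_coords p) (centering p) = 0"
    by (simp add: centering_def psubst_mult invariant_coords_def)
  then have "psubst (invariant_coords p) (centered_coeff p j) = psubst (invariant_coords p) (aa j)"
    by (simp add: centered_coeff_def psubst_translate psubst_uminus)
  then have "psubst (invariant_coords p) (invariant_gen p j) = (PC (1 / of_nat p ^ j) * of_nat p ^ j) * PX j"
    using assms(2) by (simp add: invariant_gen_def psubst_mult psubst_power aa_def invariant_coords_def mult_ac)
  also have "\<dots> = PX j"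
    by (simp only: PC_inverse_mult_power[OF assms(1)] mult_1_left)
  finally show ?thesis .
qed

lemma pvars_psubst_invariant_coords:
  assumes "pvars f \<subseteq> Inl ` {1..p}"
  shows "pvars (psubst (invariant_coords p) f) \<subseteq> {2..p}"
proof (rule pvars_psubstI)
  fix v assume "v \<in> pvars f"
  with assms obtain j where "v = Inl j" "1 \<le> j" "j \<le> p"
    by auto
  then show "pvars (invariant_coords p v) \<subseteq> {2..p}"
    using pvars_PX[of j] by (auto simp: invariant_coords_def dest!: pvars_mult[THEN subsetD])
qed

lemma invariant_eq_psubst_invariant_gen:
  assumes "p > 0" "pvars f \<subseteq> Inl ` {1..p}" "face0 p f = f"
  shows "psubst (invariant_gen p) (psubst (invariant_coords p) f) = f"
proof -
  have "psubst (invariant_gen p) (psubst (invariant_coords p) f) = cobar_homotopy p f"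
    unfolding psubst_psubst cobar_homotopy_def
    using assms(2) psubst_invariant_gen_coords[OF assms(1)] by (intro psubst_cong) auto
  also have "\<dots> = f"
    using cobar_homotopy_face0[OF assms(1), of f] assms(2,3) by auto
  finally show ?thesis .
qed

lemma cobar_space_0_iff: "f \<in> cobar_space p 0 \<longleftrightarrow> pvars f \<subseteq> Inl ` {1..p}"
  by (simp add: cobar_space_def)

lemma cobar_d_0: "cobar_d p 0 f = face0 p f - f"
  by (simp add: cobar_d_def)

lemma cocycles_0_eq_image_invariant_gen:
  assumes "p > 0"
  shows "{f \<in> cobar_space p 0. cobar_d p 0 f = 0}
       = psubst (invariant_gen p) ` {g :: (nat \<Rightarrow>\<^sub>0 nat) \<Rightarrow>\<^sub>0 rat. pvars g \<subseteq> {2..p}}"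
proof (intro subset_antisym subsetI)
  fix f assume "f \<in> {f \<in> cobar_space p 0. cobar_d p 0 f = 0}"
  then have "pvars f \<subseteq> Inl ` {1..p}" "face0 p f = f"
    by (auto simp: cobar_space_0_iff cobar_d_0)
  then show "f \<in> psubst (invariant_gen p) ` {g. pvars g \<subseteq> {2..p}}"
    using invariant_eq_psubst_invariant_gen[OF assms] pvars_psubst_invariant_coords
    by (metis (mono_tags, lifting) image_eqI mem_Collect_eq)
next
  fix f assume "f \<in> psubst (invariant_gen p) ` {g. pvars g \<subseteq> {2..p}}"
  then obtain g where g: "pvars g \<subseteq> {2..p}" and f: "f = psubst (invariant_gen p) g"
    by blast
  have "pvars f \<subseteq> Inl ` {1..p}"
    unfolding f using g pvars_invariant_gen[OF assms] by (intro pvars_psubstI) fastforce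
  moreover have "face0 p f = f"
  proof -
    have "face0 p f = psubst (\<lambda>v. face0 p (invariant_gen p v)) g"
      unfolding f face0_def psubst_psubst ..
    also have "\<dots> = f"
      unfolding f using g face0_invariant_gen[OF assms] by (intro psubst_cong) auto
    finally show ?thesis .
  qed
  ultimately show "f \<in> {f \<in> cobar_space p 0. cobar_d p 0 f = 0}"
    by (simp add: cobar_space_0_iff cobar_d_0)
qed

lemma inj_on_psubst_invariant_gen:
  assumes "p > 0"
  shows "inj_on (psubst (invariant_gen p)) {g :: (nat \<Rightarrow>\<^sub>0 nat) \<Rightarrow>\<^sub>0 rat. pvars g \<subseteq> {2..p}}"
proof (rule inj_on_inverseI)
  fix g :: "(nat \<Rightarrow>\<^sub>0 nat) \<Rightarrow>\<^sub>0 rat" assume "g \<in> {g. pvars g \<subseteq> {2..p}}"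
  then show "psubst (invariant_coords p) (psubst (invariant_gen p) g) = g"
    unfolding psubst_psubst using psubst_invariant_coords_gen[OF assms] by (intro psubst_fixes) auto
qed

theorem mainTheorem1:
  fixes p :: nat
  assumes "prime p"
  shows "\<exists>c :: nat \<Rightarrow> rat mpoly.
     (\<forall>i\<in>{2..p}. in_A p (c i) \<and> homogeneous_of_degree p (c i) (2 * i * (p - 1))
                  \<and> eta_R p (c i) = c i)
   \<and> {f \<in> cobar_space p 0. cobar_d p 0 f = 0}
       = psubst c ` {g :: (nat \<Rightarrow>\<^sub>0 nat) \<Rightarrow>\<^sub>0 rat. pvars g \<subseteq> {2..p}}
   \<and> inj_on (psubst c) {g :: (nat \<Rightarrow>\<^sub>0 nat) \<Rightarrow>\<^sub>0 rat. pvars g \<subseteq> {2..p}}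
   \<and> (\<forall>n\<ge>1. \<forall>f\<in>cobar_space p n. cobar_d p n f = 0 \<longrightarrow>
          (\<exists>g\<in>cobar_space p (n - 1). cobar_d p (n - 1) g = f))"
proof -
  have p: "p > 0"
    using assms prime_gt_0_nat by blast
  show ?thesis
  proof (intro exI[of _ "invariant_gen p"] conjI ballI allI impI)
    fix i assume "i \<in> {2..p}"
    then show "in_A p (invariant_gen p i)" "eta_R p (invariant_gen p i) = invariant_gen p i"
      using in_A_invariant_gen[OF p] eta_R_invariant_gen[OF p] by simp_all
    show "homogeneous_of_degree p (invariant_gen p i) (2 * i * (p - 1))"
      using homogeneous_invariant_gen[OF p] .
  next
    fix n f assume "n \<ge> 1" "f \<in> cobar_space p n" "cobar_d p n f = 0"
    then show "\<exists>g\<in>cobar_space p (n - 1). cobar_d p (n - 1) g = f"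
      by (rule cobar_exact[OF p])
  qed (use cocycles_0_eq_image_invariant_gen[OF p] inj_on_psubst_invariant_gen[OF p] in simp_all)
qed

end
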